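(* Let $\varphi : D \to C$ be a monic quiver homomorphism with $V(D)\neq\emptyset$. Then $\varphi$ is mono-essential if and only if the following conditions hold: (1) the vertex map $V(\varphi)$ is bijective; (2) if $\mathrm{edges}_D(v,w)\neq\emptyset$ for some $v,w\in V(D)$, then $E(\varphi)(\mathrm{edges}_D(v,w)) = \mathrm{edges}_C(V(\varphi)(v),V(\varphi)(w))$; (3) if $\mathrm{edges}_D(v,w)=\emptyset$ for some $v,w\in V(D)$, then $|\mathrm{edges}_C(V(\varphi)(v),V(\varphi)(w))|\le 1$.
   Context: A quiver is a quadruple $(V,E,\sigma,\tau)$ with $V,E$ sets and $\sigma,\tau : E \to V$ functions (source and target). A quiver homomorphism $\varphi: G \to H$ is a pair $(V(\varphi),E(\varphi))$ of functions on vertices and edges with $V(\varphi)\circ\sigma_G=\sigma_H\circ E(\varphi)$ and $V(\varphi)\circ\tau_G=\tau_H\circ E(\varphi)$; composition is componentwise. A homomorphism is monic (a monomorphism in the category of quivers) iff both its vertex and edge maps are injective. A monic homomorphism $\varphi : D \to C$ is mono-essential if for every quiver $A$ and homomorphism $\alpha : C\to A$, $\alpha\circ\varphi$ monic implies $\alpha$ monic. For a quiver $J$ and $v,w\in V(J)$, $\mathrm{edges}_J(v,w):=\sigma_J^{-1}(v)\cap\tau_J^{-1}(w)$. *)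

theory Defs
  imports Main
begin

record ('v, 'e) quiver =
  verts :: "'v set"
  arcs  :: "'e set"
  src   :: "'e \<Rightarrow> 'v"
  tgt   :: "'e \<Rightarrow> 'v"

definition wf_quiver :: "('v, 'e, 'm) quiver_scheme \<Rightarrow> bool" where
  "wf_quiver G \<longleftrightarrow> (\<forall>e\<in>arcs G. src G e \<in> verts G \<and> tgt G e \<in> verts G)"

definition quiver_hom ::
  "('v, 'e, 'm) quiver_scheme \<Rightarrow> ('w, 'f, 'n) quiver_scheme \<Rightarrow> ('v \<Rightarrow> 'w) \<Rightarrow> ('e \<Rightarrow> 'f) \<Rightarrow> bool" where
  "quiver_hom G H fv fe \<longleftrightarrow>
     (\<forall>v\<in>verts G. fv v \<in> verts H) \<and> (\<forall>e\<in>arcs G. fe e \<in> arcs H) \<and>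
     (\<forall>e\<in>arcs G. fv (src G e) = src H (fe e) \<and> fv (tgt G e) = tgt H (fe e))"

definition monic_hom ::
  "('v, 'e, 'm) quiver_scheme \<Rightarrow> ('w, 'f, 'n) quiver_scheme \<Rightarrow> ('v \<Rightarrow> 'w) \<Rightarrow> ('e \<Rightarrow> 'f) \<Rightarrow> bool" where
  "monic_hom G H fv fe \<longleftrightarrow> quiver_hom G H fv fe \<and> inj_on fv (verts G) \<and> inj_on fe (arcs G)"

text \<open>Mono-essential, with the test quivers A ranging over quivers whose vertex
  and edge types are 'x and 'y (given by the type witnesses).\<close>
definition mono_essential_at ::
  "'x itself \<Rightarrow> 'y itself \<Rightarrow> ('v, 'e) quiver \<Rightarrow> ('w, 'f) quiver \<Rightarrow> ('v \<Rightarrow> 'w) \<Rightarrow> ('e \<Rightarrow> 'f) \<Rightarrow> bool" where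
  "mono_essential_at TX TY D C fv fe \<longleftrightarrow>
     monic_hom D C fv fe \<and>
     (\<forall>(A :: ('x, 'y) quiver) av ae.
        wf_quiver A \<longrightarrow> quiver_hom C A av ae \<longrightarrow>
        monic_hom D A (av \<circ> fv) (ae \<circ> fe) \<longrightarrow> monic_hom C A av ae)"

definition edges_between :: "('v, 'e, 'm) quiver_scheme \<Rightarrow> 'v \<Rightarrow> 'v \<Rightarrow> 'e set" where
  "edges_between J v w = {e \<in> arcs J. src J e = v \<and> tgt J e = w}"

end

theory Submission
  imports Defs
begin

text \<open>Sufficiency: a homomorphism out of C is injective on vertices because every vertex of C
  comes from D; on arcs it suffices to look inside each hom-set of C, which is either the
  image of a hom-set of D or has at most one element. Necessity: if a vertex of C is missed,
  identify it with an image vertex; if an arc of C outside the image has a parallel partner,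
  redirect it onto that partner. Either collapse is monic on D but not on C. The collapsed
  quivers live on the vertex and arc types of C, so necessity only needs test quivers of
  those types, whereas sufficiency holds for test quivers of any types.\<close>

lemma quiver_hom_image_edges_between:
  assumes "quiver_hom G H fv fe"
  shows "fe ` edges_between G v w \<subseteq> edges_between H (fv v) (fv w)"
  using assms unfolding quiver_hom_def edges_between_def by auto

lemma monic_hom_edges_between_preimage:
  assumes "wf_quiver D" and "monic_hom D C fv fe"
    and "v \<in> verts D" and "w \<in> verts D" and d: "d \<in> arcs D"
    and "fe d \<in> edges_between C (fv v) (fv w)"
  shows "d \<in> edges_between D v w"
proof -
  have "fv (src D d) = fv v" "fv (tgt D d) = fv w"
    using assms(2,6) d unfolding monic_hom_def quiver_hom_def edges_between_def by auto
  moreover have "src D d \<in> verts D" "tgt D d \<in> verts D"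
    using assms(1) d unfolding wf_quiver_def by auto
  ultimately show ?thesis
    using assms(2-4) d unfolding monic_hom_def inj_on_def edges_between_def by auto
qed

lemma monic_hom_edges_between_Int_image:
  assumes "wf_quiver D" and mon: "monic_hom D C fv fe"
    and v: "v \<in> verts D" and w: "w \<in> verts D"
  shows "edges_between C (fv v) (fv w) \<inter> fe ` arcs D = fe ` edges_between D v w"
proof
  show "edges_between C (fv v) (fv w) \<inter> fe ` arcs D \<subseteq> fe ` edges_between D v w"
    using monic_hom_edges_between_preimage[OF assms] by blast
  have "quiver_hom D C fv fe" using mon by (simp add: monic_hom_def)
  then show "fe ` edges_between D v w \<subseteq> edges_between C (fv v) (fv w) \<inter> fe ` arcs D"
    using quiver_hom_image_edges_between by (fastforce simp: edges_between_def)
qed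

lemma quiver_hom_inj_on_arcs:
  assumes wf: "wf_quiver C" and hom: "quiver_hom C A av ae"
    and injv: "inj_on av (verts C)"
    and inj_between: "\<And>x y. x \<in> verts C \<Longrightarrow> y \<in> verts C \<Longrightarrow> inj_on ae (edges_between C x y)"
  shows "inj_on ae (arcs C)"
proof (rule inj_onI)
  fix e e' assume e: "e \<in> arcs C" and e': "e' \<in> arcs C" and eq: "ae e = ae e'"
  have "av (src C e) = av (src C e')" "av (tgt C e) = av (tgt C e')"
    using hom e e' eq unfolding quiver_hom_def by metis+
  then have "src C e = src C e'" "tgt C e = tgt C e'"
    using injv wf e e' unfolding wf_quiver_def inj_on_def by blast+
  then have "e \<in> edges_between C (src C e) (tgt C e)" "e' \<in> edges_between C (src C e) (tgt C e)"
    using e e' unfolding edges_between_def by auto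
  moreover have "src C e \<in> verts C" "tgt C e \<in> verts C"
    using wf e unfolding wf_quiver_def by auto
  ultimately show "e = e'" using inj_between eq by (meson inj_onD)
qed

lemma mono_essential_atI:
  fixes D :: "('v, 'e) quiver" and C :: "('w, 'f) quiver"
  assumes wf: "wf_quiver C" and mon: "monic_hom D C fv fe"
    and bij: "bij_betw fv (verts D) (verts C)"
    and image: "\<forall>v\<in>verts D. \<forall>w\<in>verts D. edges_between D v w \<noteq> {} \<longrightarrow>
          fe ` edges_between D v w = edges_between C (fv v) (fv w)"
    and at_most_one: "\<forall>v\<in>verts D. \<forall>w\<in>verts D. edges_between D v w = {} \<longrightarrow>
          finite (edges_between C (fv v) (fv w)) \<and> card (edges_between C (fv v) (fv w)) \<le> 1"
  shows "mono_essential_at TX TY D C fv fe"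
  unfolding mono_essential_at_def
proof (intro conjI allI impI)
  show "monic_hom D C fv fe" by (fact mon)
  fix A :: "('x, 'y) quiver" and av ae
  assume hom: "quiver_hom C A av ae" and comp: "monic_hom D A (av \<circ> fv) (ae \<circ> fe)"
  have surj: "verts C = fv ` verts D" using bij by (simp add: bij_betw_def)
  have injv: "inj_on av (verts C)"
    using comp unfolding surj monic_hom_def by (simp add: inj_on_imageI)
  have "inj_on ae (edges_between C x y)" if "x \<in> verts C" "y \<in> verts C" for x y
  proof -
    have "x \<in> fv ` verts D" "y \<in> fv ` verts D" using that surj by simp_all
    then obtain v w where vw: "v \<in> verts D" "w \<in> verts D" "x = fv v" "y = fv w"
      by (elim imageE)
    show ?thesis
    proof (cases "edges_between D v w = {}")
      case True
      then have "card (edges_between C x y) \<le> Suc 0" "finite (edges_between C x y)"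
        using at_most_one vw by auto
      then show ?thesis by (simp add: card_le_Suc0_iff_eq inj_on_def)
    next
      case False
      have "edges_between D v w \<subseteq> arcs D" by (auto simp: edges_between_def)
      then have "inj_on (ae \<circ> fe) (edges_between D v w)"
        using comp by (auto simp: monic_hom_def intro: inj_on_subset)
      then have "inj_on ae (fe ` edges_between D v w)" by (rule inj_on_imageI)
      then show ?thesis using image vw False by simp
    qed
  qed
  then have "inj_on ae (arcs C)" using quiver_hom_inj_on_arcs[OF wf hom injv] by blast
  then show "monic_hom C A av ae" using hom injv unfolding monic_hom_def by blast
qed

lemma mono_essential_atD:
  fixes A :: "('x, 'y) quiver"
  assumes "mono_essential_at TYPE('x) TYPE('y) D C fv fe"
    and "wf_quiver A" and "quiver_hom C A av ae" and "monic_hom D A (av \<circ> fv) (ae \<circ> fe)"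
  shows "monic_hom C A av ae"
  using assms unfolding mono_essential_at_def by blast

lemma mono_essential_at_monic_hom:
  "mono_essential_at TX TY D C fv fe \<Longrightarrow> monic_hom D C fv fe"
  unfolding mono_essential_at_def by blast

lemma mono_essential_surj_on_verts:
  fixes D :: "('v, 'e) quiver" and C :: "('w, 'f) quiver"
  assumes wf: "wf_quiver C" and me: "mono_essential_at TYPE('w) TYPE('f) D C fv fe"
    and c: "c \<in> verts C" and v0: "v0 \<in> verts D"
  shows "c \<in> fv ` verts D"
proof (rule ccontr)
  assume missed: "c \<notin> fv ` verts D"
  have mon: "monic_hom D C fv fe" using me by (rule mono_essential_at_monic_hom)
  have fv0: "fv v0 \<in> verts C" using mon v0 unfolding monic_hom_def quiver_hom_def by blast
  have ne: "c \<noteq> fv v0" using missed v0 by blast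
  define av where "av = (\<lambda>x. if x = c then fv v0 else x)"
  define A :: "('w, 'f) quiver"
    where "A = \<lparr>verts = verts C - {c}, arcs = arcs C, src = av \<circ> src C, tgt = av \<circ> tgt C\<rparr>"
  have fixed: "\<forall>v\<in>verts D. av (fv v) = fv v" using missed unfolding av_def by auto
  have "wf_quiver A" using wf fv0 ne unfolding A_def av_def wf_quiver_def by auto
  moreover have "quiver_hom C A av id" using fv0 ne unfolding A_def av_def quiver_hom_def by auto
  moreover have "monic_hom D A (av \<circ> fv) (id \<circ> fe)"
    using mon fixed missed unfolding monic_hom_def quiver_hom_def A_def inj_on_def by auto
  ultimately have "monic_hom C A av id" by (rule mono_essential_atD[OF me])
  then have "inj_on av (verts C)" by (simp add: monic_hom_def)
  moreover have "av c = av (fv v0)" unfolding av_def using ne by auto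
  ultimately show False using c fv0 ne unfolding inj_on_def by blast
qed

lemma mono_essential_parallel_arcs_eq:
  fixes D :: "('v, 'e) quiver" and C :: "('w, 'f) quiver"
  assumes wf: "wf_quiver C" and me: "mono_essential_at TYPE('w) TYPE('f) D C fv fe"
    and e: "e \<in> edges_between C x y" and e': "e' \<in> edges_between C x y"
    and missed: "e \<notin> fe ` arcs D"
  shows "e = e'"
proof (rule ccontr)
  assume ne: "e \<noteq> e'"
  have mon: "monic_hom D C fv fe" using me by (rule mono_essential_at_monic_hom)
  define ae where "ae = (\<lambda>a. if a = e then e' else a)"
  define A :: "('w, 'f) quiver"
    where "A = \<lparr>verts = verts C, arcs = arcs C - {e}, src = src C, tgt = tgt C\<rparr>"
  have fixed: "\<forall>d\<in>arcs D. ae (fe d) = fe d" using missed unfolding ae_def by auto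
  have "wf_quiver A" using wf unfolding A_def wf_quiver_def by auto
  moreover have "quiver_hom C A id ae"
    using ne e e' unfolding A_def ae_def quiver_hom_def edges_between_def by auto
  moreover have "monic_hom D A (id \<circ> fv) (ae \<circ> fe)"
    using mon fixed missed unfolding monic_hom_def quiver_hom_def A_def inj_on_def by auto
  ultimately have "monic_hom C A id ae" by (rule mono_essential_atD[OF me])
  then have "inj_on ae (arcs C)" by (simp add: monic_hom_def)
  moreover have "ae e = ae e'" unfolding ae_def using ne by auto
  ultimately show False using e e' ne unfolding inj_on_def edges_between_def by blast
qed

lemma mono_essential_edges_between_image:
  fixes D :: "('v, 'e) quiver" and C :: "('w, 'f) quiver"
  assumes wfD: "wf_quiver D" and wfC: "wf_quiver C"
    and me: "mono_essential_at TYPE('w) TYPE('f) D C fv fe"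
    and v: "v \<in> verts D" and w: "w \<in> verts D" and nonempty: "edges_between D v w \<noteq> {}"
  shows "fe ` edges_between D v w = edges_between C (fv v) (fv w)"
proof
  have mon: "monic_hom D C fv fe" using me by (rule mono_essential_at_monic_hom)
  then have "quiver_hom D C fv fe" by (simp add: monic_hom_def)
  then show sub: "fe ` edges_between D v w \<subseteq> edges_between C (fv v) (fv w)"
    by (rule quiver_hom_image_edges_between)
  show "edges_between C (fv v) (fv w) \<subseteq> fe ` edges_between D v w"
  proof
    fix e assume e: "e \<in> edges_between C (fv v) (fv w)"
    show "e \<in> fe ` edges_between D v w"
    proof (cases "e \<in> fe ` arcs D")
      case True
      then show ?thesis using monic_hom_edges_between_Int_image[OF wfD mon v w] e by blast
    next
      case False
      obtain d where d: "d \<in> edges_between D v w" using nonempty by blast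
      then have "fe d \<in> edges_between C (fv v) (fv w)" using sub by blast
      then have "e = fe d" by (rule mono_essential_parallel_arcs_eq[OF wfC me e _ False])
      then show ?thesis using d by blast
    qed
  qed
qed

lemma mono_essential_card_edges_between_le_1:
  fixes D :: "('v, 'e) quiver" and C :: "('w, 'f) quiver"
  assumes wfD: "wf_quiver D" and wfC: "wf_quiver C"
    and me: "mono_essential_at TYPE('w) TYPE('f) D C fv fe"
    and v: "v \<in> verts D" and w: "w \<in> verts D" and empty: "edges_between D v w = {}"
  shows "finite (edges_between C (fv v) (fv w)) \<and> card (edges_between C (fv v) (fv w)) \<le> 1"
proof -
  let ?E = "edges_between C (fv v) (fv w)"
  have mon: "monic_hom D C fv fe" using me by (rule mono_essential_at_monic_hom)
  have "?E \<inter> fe ` arcs D = {}"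
    using monic_hom_edges_between_Int_image[OF wfD mon v w] empty by simp
  then have not_in_image: "e \<notin> fe ` arcs D" if "e \<in> ?E" for e
    using that by blast
  have "e = e'" if "e \<in> ?E" "e' \<in> ?E" for e e'
    by (rule mono_essential_parallel_arcs_eq[OF wfC me that not_in_image[OF that(1)]])
  then have "?E = {} \<or> (\<exists>e. ?E = {e})" by blast
  then show ?thesis by auto
qed

theorem mainTheorem4:
  fixes D :: "('v, 'e) quiver" and C :: "('w, 'f) quiver"
    and fv :: "'v \<Rightarrow> 'w" and fe :: "'e \<Rightarrow> 'f"
  assumes "wf_quiver D" and "wf_quiver C"
    and "monic_hom D C fv fe"
    and "verts D \<noteq> {}"
  defines "conds \<equiv>
      bij_betw fv (verts D) (verts C) \<and>
      (\<forall>v\<in>verts D. \<forall>w\<in>verts D. edges_between D v w \<noteq> {} \<longrightarrow>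
          fe ` edges_between D v w = edges_between C (fv v) (fv w)) \<and>
      (\<forall>v\<in>verts D. \<forall>w\<in>verts D. edges_between D v w = {} \<longrightarrow>
          finite (edges_between C (fv v) (fv w)) \<and> card (edges_between C (fv v) (fv w)) \<le> 1)"
  shows "(mono_essential_at TYPE('w) TYPE('f) D C fv fe \<longleftrightarrow> conds)
     \<and> (conds \<longrightarrow> mono_essential_at TYPE('x) TYPE('y) D C fv fe)"
proof -
  have sufficient: "conds \<Longrightarrow> mono_essential_at TX TY D C fv fe" for TX TY
    unfolding conds_def using mono_essential_atI[OF assms(2,3)] by blast
  have necessary: conds if me: "mono_essential_at TYPE('w) TYPE('f) D C fv fe"
  proof -
    obtain v0 where v0: "v0 \<in> verts D" using assms(4) by blast
    have "fv ` verts D \<subseteq> verts C" using assms(3) by (auto simp: monic_hom_def quiver_hom_def)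
    moreover have "verts C \<subseteq> fv ` verts D"
      using mono_essential_surj_on_verts[OF assms(2) me _ v0] by blast
    ultimately have "bij_betw fv (verts D) (verts C)"
      using assms(3) by (auto simp: bij_betw_def monic_hom_def)
    then show conds
      unfolding conds_def
      using mono_essential_edges_between_image[OF assms(1,2) me]
        mono_essential_card_edges_between_le_1[OF assms(1,2) me] by simp
  qed
  show ?thesis
    using sufficient[of "TYPE('w)" "TYPE('f)"] sufficient[of "TYPE('x)" "TYPE('y)"] necessary
    by blast
qed

end
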